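(* Let $\lambda$ be a limit ordinal and $(X_\mu,T)_{\mu\le\lambda}$ minimal systems such that $(X_\lambda,T)$ is the inverse limit of $(X_\mu,T)_{\mu<\lambda}$ with respect to factor maps $\phi_{\mu,\nu}:X_\nu\to X_\mu$ ($\mu\le\nu<\lambda$). Then for every $d\in\mathbb{N}$, $(N_d(X_\lambda),\mathcal{G}_d(T))$ is the inverse limit of $(N_d(X_\mu),\mathcal{G}_d(T))_{\mu<\lambda}$ with respect to the induced maps $\phi_{\mu,\nu}^{(d)}$.
   Context: $N_d(Z)=\overline{\{(T^{p+q}z,\dots,T^{p+dq}z):z\in Z,p,q\in\mathbb{Z}\}}$; $\mathcal{G}_d(T)=\langle T\times\cdots\times T,\ T\times T^2\times\cdots\times T^d\rangle$; $\phi^{(d)}=\phi\times\cdots\times\phi$. *)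

theory Defs
  imports "HOL-Analysis.Analysis"
begin

definition tds :: "'a::topological_space set \<Rightarrow> ('a \<Rightarrow> 'a) \<Rightarrow> bool" where
  "tds X T \<longleftrightarrow> compact X \<and> (\<exists>T'. homeomorphism X X T T')"

definition minimal_sys :: "'a::topological_space set \<Rightarrow> ('a \<Rightarrow> 'a) \<Rightarrow> bool" where
  "minimal_sys X T \<longleftrightarrow> tds X T \<and> X \<noteq> {} \<and>
     (\<forall>A. closedin (top_of_set X) A \<and> A \<noteq> {} \<and> T ` A \<subseteq> A \<longrightarrow> A = X)"

definition ipow :: "'a set \<Rightarrow> ('a \<Rightarrow> 'a) \<Rightarrow> int \<Rightarrow> 'a \<Rightarrow> 'a" where
  "ipow X T n = (if n \<ge> 0 then T ^^ nat n else (inv_into X T) ^^ nat (- n))"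

text \<open>d-tuples are functions nat => 'a, with coordinates 1..d and undefined elsewhere
  (the product topology on nat => 'a restricted to these is the topology of X^d).\<close>
definition prod_map :: "nat \<Rightarrow> ('a \<Rightarrow> 'b) \<Rightarrow> (nat \<Rightarrow> 'a) \<Rightarrow> (nat \<Rightarrow> 'b)" where
  "prod_map d f x = (\<lambda>j. if j \<in> {1..d} then f (x j) else undefined)"

definition N_d :: "nat \<Rightarrow> 'a::topological_space set \<Rightarrow> ('a \<Rightarrow> 'a) \<Rightarrow> (nat \<Rightarrow> 'a) set" where
  "N_d d Z T = closure {(\<lambda>j. if j \<in> {1..d} then ipow Z T (p + int j * q) z else undefined)
                         | z p q. z \<in> Z}"

text \<open>Generators of G_d(T): True gives T x ... x T, False gives T x T^2 x ... x T^d.\<close>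
definition G_d :: "nat \<Rightarrow> ('a \<Rightarrow> 'a) \<Rightarrow> bool \<Rightarrow> (nat \<Rightarrow> 'a) \<Rightarrow> (nat \<Rightarrow> 'a)" where
  "G_d d T b x = (if b then (\<lambda>j. if j \<in> {1..d} then T (x j) else undefined)
                  else (\<lambda>j. if j \<in> {1..d} then (T ^^ j) (x j) else undefined))"

text \<open>Factor map between systems whose acting group is generated by the family S resp. T.\<close>
definition factor_map :: "'b::topological_space set \<Rightarrow> ('k \<Rightarrow> 'b \<Rightarrow> 'b) \<Rightarrow>
    'a::topological_space set \<Rightarrow> ('k \<Rightarrow> 'a \<Rightarrow> 'a) \<Rightarrow> ('b \<Rightarrow> 'a) \<Rightarrow> bool" where
  "factor_map Y S X T f \<longleftrightarrow> continuous_on Y f \<and> f ` Y = X \<and> (\<forall>k. \<forall>y\<in>Y. f (S k y) = T k (f y))"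

text \<open>Inverse system indexed by a well-ordered index type (the ordinals below lambda),
  with factor maps phi mu nu : X nu -> X mu for mu <= nu.\<close>
definition inverse_system :: "('i::order \<Rightarrow> 'a::topological_space set) \<Rightarrow> ('i \<Rightarrow> 'k \<Rightarrow> 'a \<Rightarrow> 'a)
    \<Rightarrow> ('i \<Rightarrow> 'i \<Rightarrow> 'a \<Rightarrow> 'a) \<Rightarrow> bool" where
  "inverse_system X T \<phi> \<longleftrightarrow>
     (\<forall>\<mu> \<nu>. \<mu> \<le> \<nu> \<longrightarrow> factor_map (X \<nu>) (T \<nu>) (X \<mu>) (T \<mu>) (\<phi> \<mu> \<nu>)) \<and>
     (\<forall>\<mu>. \<forall>x\<in>X \<mu>. \<phi> \<mu> \<mu> x = x) \<and>
     (\<forall>\<mu> \<nu> \<kappa>. \<mu> \<le> \<nu> \<and> \<nu> \<le> \<kappa> \<longrightarrow> (\<forall>x\<in>X \<kappa>. \<phi> \<mu> \<nu> (\<phi> \<nu> \<kappa> x) = \<phi> \<mu> \<kappa> x))"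

text \<open>(Y,S) is the inverse limit of the inverse system (X,T,phi) via the maps psi mu : Y -> X mu:
  the psi are compatible factor maps and y |-> (psi mu y)_mu is a bijection of Y onto the set of
  compatible families (for compact Y this continuous bijection onto the Hausdorff inverse limit
  is an isomorphism of systems).\<close>
definition is_inverse_limit :: "('i::order \<Rightarrow> 'a::topological_space set) \<Rightarrow> ('i \<Rightarrow> 'k \<Rightarrow> 'a \<Rightarrow> 'a)
    \<Rightarrow> ('i \<Rightarrow> 'i \<Rightarrow> 'a \<Rightarrow> 'a) \<Rightarrow> 'b::topological_space set \<Rightarrow> ('k \<Rightarrow> 'b \<Rightarrow> 'b)
    \<Rightarrow> ('i \<Rightarrow> 'b \<Rightarrow> 'a) \<Rightarrow> bool" where
  "is_inverse_limit X T \<phi> Y S \<psi> \<longleftrightarrow>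
     inverse_system X T \<phi> \<and>
     (\<forall>\<mu>. factor_map Y S (X \<mu>) (T \<mu>) (\<psi> \<mu>)) \<and>
     (\<forall>\<mu> \<nu>. \<mu> \<le> \<nu> \<longrightarrow> (\<forall>y\<in>Y. \<phi> \<mu> \<nu> (\<psi> \<nu> y) = \<psi> \<mu> y)) \<and>
     (\<forall>x. (\<forall>\<mu>. x \<mu> \<in> X \<mu>) \<and> (\<forall>\<mu> \<nu>. \<mu> \<le> \<nu> \<longrightarrow> \<phi> \<mu> \<nu> (x \<nu>) = x \<mu>)
          \<longrightarrow> (\<exists>!y. y \<in> Y \<and> (\<forall>\<mu>. \<psi> \<mu> y = x \<mu>)))"

end

theory Submission
  imports Defs
begin

text \<open>
  A factor map \<open>f\<close> commutes with all integer powers of the transformations, so its \<open>d\<close>-fold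
  product sends each progression tuple \<open>(T\<^sup>p\<^sup>+\<^sup>q z, \<dots>, T\<^sup>p\<^sup>+\<^sup>d\<^sup>q z)\<close> to the corresponding tuple
  of \<open>f z\<close>; being continuous on the compact closure, it therefore maps \<open>N\<^sub>d\<close> onto \<open>N\<^sub>d\<close>, and it
  intertwines the generators of \<open>\<G>\<^sub>d\<close>. Compatibility and uniqueness in the inverse limit hold
  coordinatewise. For existence, the fibres of the product maps of the \<open>\<psi>\<^sub>\<mu>\<close> over a compatible
  family form a chain of nonempty compact subsets of \<open>N\<^sub>d(Y)\<close>, decreasing along a linear order,
  so they have a common point.
\<close>

definition tuples :: "nat \<Rightarrow> 'a set \<Rightarrow> (nat \<Rightarrow> 'a) set" where
  "tuples d A = PiE UNIV (\<lambda>j. if j \<in> {1..d} then A else {undefined})"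

definition progression :: "nat \<Rightarrow> 'a set \<Rightarrow> ('a \<Rightarrow> 'a) \<Rightarrow> 'a \<Rightarrow> int \<Rightarrow> int \<Rightarrow> nat \<Rightarrow> 'a" where
  "progression d Z T z p q = (\<lambda>j. if j \<in> {1..d} then ipow Z T (p + int j * q) z else undefined)"

definition progression_tuples :: "nat \<Rightarrow> 'a set \<Rightarrow> ('a \<Rightarrow> 'a) \<Rightarrow> (nat \<Rightarrow> 'a) set" where
  "progression_tuples d Z T = {progression d Z T z p q | z p q. z \<in> Z}"

lemma N_d_eq_closure_progression_tuples: "N_d d Z T = closure (progression_tuples d Z T)"
  unfolding N_d_def progression_tuples_def progression_def ..

lemma mem_tuples_iff:
  "x \<in> tuples d A \<longleftrightarrow> (\<forall>j\<in>{1..d}. x j \<in> A) \<and> (\<forall>j. j \<notin> {1..d} \<longrightarrow> x j = undefined)"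
  unfolding tuples_def PiE_iff by (auto split: if_splits)

lemma compact_tuples:
  fixes A :: "'a::topological_space set"
  assumes "compact A"
  shows "compact (tuples d A)"
proof -
  have "compactin (product_topology (\<lambda>_. euclidean) UNIV) (tuples d A)"
    unfolding tuples_def compactin_PiE using assms by auto
  then show ?thesis
    by (simp add: euclidean_product_topology)
qed

lemma continuous_on_prod_map:
  fixes f :: "'a::topological_space \<Rightarrow> 'b::topological_space"
  assumes "continuous_on A f"
  shows "continuous_on (tuples d A) (prod_map d f)"
  unfolding prod_map_def
proof (intro continuous_on_coordinatewise_then_product)
  fix j
  show "continuous_on (tuples d A) (\<lambda>x. if j \<in> {1..d} then f (x j) else undefined)"
  proof (cases "j \<in> {1..d}")
    case True
    have "continuous_on (tuples d A) (\<lambda>x. x j)"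
      by (rule continuous_on_subset[OF continuous_on_product_coordinates]) simp
    moreover have "(\<lambda>x. x j) ` tuples d A \<subseteq> A"
      using True by (auto simp: mem_tuples_iff)
    ultimately show ?thesis
      using True continuous_on_compose2[OF assms] by simp
  next
    case False
    then show ?thesis
      by (simp only: if_False) (rule continuous_on_const)
  qed
qed

lemma prod_map_prod_map:
  assumes "x \<in> tuples d A" "\<forall>a\<in>A. f (g a) = h a"
  shows "prod_map d f (prod_map d g x) = prod_map d h x"
  using assms by (auto simp: prod_map_def mem_tuples_iff)

lemma prod_map_id_on:
  assumes "x \<in> tuples d A" "\<forall>a\<in>A. f a = a"
  shows "prod_map d f x = x"
  using assms by (auto simp: prod_map_def mem_tuples_iff)

lemma tdsD:
  assumes "tds A T"
  shows "compact A" "T ` A = A" "inj_on T A"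
proof -
  obtain T' where "homeomorphism A A T T'"
    using assms unfolding tds_def by auto
  then show "T ` A = A" "inj_on T A"
    unfolding homeomorphism_def inj_on_def by metis+
  show "compact A"
    using assms unfolding tds_def by auto
qed

lemma funpow_mem: "T ` A \<subseteq> A \<Longrightarrow> z \<in> A \<Longrightarrow> (T ^^ n) z \<in> A"
  by (induction n) auto

lemma ipow_mem:
  assumes "T ` A = A" "z \<in> A"
  shows "ipow A T n z \<in> A"
proof -
  have "inv_into A T ` A \<subseteq> A"
    using assms(1) by (metis image_subsetI inv_into_into)
  then show ?thesis
    unfolding ipow_def using assms funpow_mem[of T A] funpow_mem[of "inv_into A T" A] by auto
qed

lemma funpow_commute:
  assumes "T ` A \<subseteq> A" "\<forall>y\<in>A. f (T y) = U (f y)" "z \<in> A"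
  shows "f ((T ^^ n) z) = (U ^^ n) (f z)"
  using assms by (induction n) (auto simp: funpow_mem)

lemma inv_into_commute:
  assumes TA: "TA ` A = A" and TB: "inj_on TB B" and f: "f ` A = B"
    and comm: "\<forall>y\<in>A. f (TA y) = TB (f y)" and w: "w \<in> A"
  shows "f (inv_into A TA w) = inv_into B TB (f w)"
proof -
  let ?u = "inv_into A TA w"
  have "?u \<in> A" "TA ?u = w"
    using TA w by (metis inv_into_into, metis f_inv_into_f)
  then have "f w = TB (f ?u)" "f ?u \<in> B"
    using comm f by auto
  then show ?thesis
    using TB by simp
qed

lemma ipow_commute:
  assumes TA: "TA ` A = A" and TB: "inj_on TB B" and f: "f ` A = B"
    and comm: "\<forall>y\<in>A. f (TA y) = TB (f y)" and z: "z \<in> A"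
  shows "f (ipow A TA n z) = ipow B TB n (f z)"
proof -
  have "inv_into A TA ` A \<subseteq> A"
    using TA by (metis image_subsetI inv_into_into)
  moreover have "\<forall>w\<in>A. f (inv_into A TA w) = inv_into B TB (f w)"
    using inv_into_commute[OF TA TB f comm] by blast
  ultimately show ?thesis
    unfolding ipow_def using funpow_commute[OF _ comm z] funpow_commute[of _ A f, OF _ _ z] TA
    by auto
qed

lemma progression_tuples_subset_tuples:
  "T ` A = A \<Longrightarrow> progression_tuples d A T \<subseteq> tuples d A"
  by (auto simp: progression_tuples_def progression_def mem_tuples_iff ipow_mem)

lemma N_d_subset_tuples:
  fixes A :: "'a::metric_space set"
  assumes "tds A T"
  shows "N_d d A T \<subseteq> tuples d A"
  unfolding N_d_eq_closure_progression_tuples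
  using assms by (intro closure_minimal progression_tuples_subset_tuples compact_imp_closed
      compact_tuples) (auto dest: tdsD)

lemma compact_N_d:
  fixes A :: "'a::metric_space set"
  assumes "tds A T"
  shows "compact (N_d d A T)"
proof -
  have "compact (tuples d A \<inter> N_d d A T)"
    using assms unfolding N_d_eq_closure_progression_tuples
    by (intro compact_Int_closed compact_tuples tdsD(1)) simp_all
  moreover have "tuples d A \<inter> N_d d A T = N_d d A T"
    using N_d_subset_tuples[OF assms] by blast
  ultimately show ?thesis
    by simp
qed

lemma continuous_on_prod_map_N_d:
  fixes A :: "'a::metric_space set" and f :: "'a \<Rightarrow> 'b::metric_space"
  assumes "tds A T" "continuous_on A f"
  shows "continuous_on (N_d d A T) (prod_map d f)"
  using continuous_on_prod_map[OF assms(2)] N_d_subset_tuples[OF assms(1)]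
  by (rule continuous_on_subset)

lemma prod_map_progression:
  assumes "TA ` A = A" "inj_on TB B" "f ` A = B" "\<forall>y\<in>A. f (TA y) = TB (f y)" "z \<in> A"
  shows "prod_map d f (progression d A TA z p q) = progression d B TB (f z) p q"
  using ipow_commute[OF assms] by (auto simp: prod_map_def progression_def)

lemma prod_map_progression_tuples:
  assumes TA: "TA ` A = A" and TB: "inj_on TB B" and f: "f ` A = B"
    and comm: "\<forall>y\<in>A. f (TA y) = TB (f y)"
  shows "prod_map d f ` progression_tuples d A TA = progression_tuples d B TB"
proof -
  have "prod_map d f ` progression_tuples d A TA = {prod_map d f (progression d A TA z p q) | z p q. z \<in> A}"
    unfolding progression_tuples_def by blast
  also have "\<dots> = {progression d B TB (f z) p q | z p q. z \<in> A}"
    using prod_map_progression[OF TA TB f comm] by metis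
  also have "\<dots> = progression_tuples d B TB"
    unfolding progression_tuples_def using f by blast
  finally show ?thesis .
qed

lemma image_closure_compact:
  fixes f :: "'a::topological_space \<Rightarrow> 'b::t2_space"
  assumes "compact (closure S)" "continuous_on (closure S) f"
  shows "f ` closure S = closure (f ` S)"
proof
  show "f ` closure S \<subseteq> closure (f ` S)"
    using image_closure_subset[OF assms(2) closed_closure closure_subset] .
  have "closed (f ` closure S)"
    using assms by (intro compact_imp_closed compact_continuous_image)
  then show "closure (f ` S) \<subseteq> f ` closure S"
    by (intro closure_minimal image_mono closure_subset)
qed

lemma prod_map_image_N_d:
  fixes A :: "'a::metric_space set" and B :: "'b::metric_space set"
  assumes TA: "tds A TA" and TB: "tds B TB"
    and f: "factor_map A (\<lambda>_::unit. TA) B (\<lambda>_. TB) f"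
  shows "prod_map d f ` N_d d A TA = N_d d B TB"
proof -
  have "continuous_on (N_d d A TA) (prod_map d f)"
    using TA f unfolding factor_map_def by (blast intro: continuous_on_prod_map_N_d)
  then show ?thesis
    using compact_N_d[OF TA] f tdsD(2)[OF TA] tdsD(3)[OF TB]
    unfolding N_d_eq_closure_progression_tuples factor_map_def
    by (simp add: image_closure_compact prod_map_progression_tuples)
qed

lemma prod_map_G_d:
  assumes "TA ` A \<subseteq> A" "\<forall>y\<in>A. f (TA y) = TB (f y)" "x \<in> tuples d A"
  shows "prod_map d f (G_d d TA k x) = G_d d TB k (prod_map d f x)"
  using assms funpow_commute[OF assms(1,2)]
  by (auto simp: G_d_def prod_map_def mem_tuples_iff)

lemma factor_map_prod_map:
  fixes A :: "'a::metric_space set" and B :: "'b::metric_space set"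
  assumes TA: "tds A TA" and TB: "tds B TB"
    and f: "factor_map A (\<lambda>_::unit. TA) B (\<lambda>_. TB) f"
  shows "factor_map (N_d d A TA) (G_d d TA) (N_d d B TB) (G_d d TB) (prod_map d f)"
  unfolding factor_map_def
proof (intro conjI allI ballI)
  show "continuous_on (N_d d A TA) (prod_map d f)"
    using TA f unfolding factor_map_def by (blast intro: continuous_on_prod_map_N_d)
  show "prod_map d f ` N_d d A TA = N_d d B TB"
    using prod_map_image_N_d[OF TA TB f] .
  show "prod_map d f (G_d d TA k x) = G_d d TB k (prod_map d f x)" if "x \<in> N_d d A TA" for k x
  proof (rule prod_map_G_d)
    show "TA ` A \<subseteq> A" "\<forall>y\<in>A. f (TA y) = TB (f y)"
      using f tdsD(2)[OF TA] unfolding factor_map_def by auto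
    show "x \<in> tuples d A"
      using that N_d_subset_tuples[OF TA] by blast
  qed
qed

lemma inverse_systemD:
  assumes "inverse_system X T \<phi>"
  shows "\<mu> \<le> \<nu> \<Longrightarrow> factor_map (X \<nu>) (T \<nu>) (X \<mu>) (T \<mu>) (\<phi> \<mu> \<nu>)"
    "x \<in> X \<mu> \<Longrightarrow> \<phi> \<mu> \<mu> x = x"
    "\<mu> \<le> \<nu> \<Longrightarrow> \<nu> \<le> \<kappa> \<Longrightarrow> x \<in> X \<kappa> \<Longrightarrow> \<phi> \<mu> \<nu> (\<phi> \<nu> \<kappa> x) = \<phi> \<mu> \<kappa> x"
  using assms unfolding inverse_system_def by blast+

lemma inverse_system_prod_map:
  fixes X :: "'i::order \<Rightarrow> 'a::metric_space set"
  assumes tds: "\<And>\<mu>. tds (X \<mu>) (T \<mu>)" and sys: "inverse_system X (\<lambda>\<mu> (_::unit). T \<mu>) \<phi>"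
  shows "inverse_system (\<lambda>\<mu>. N_d d (X \<mu>) (T \<mu>)) (\<lambda>\<mu>. G_d d (T \<mu>)) (\<lambda>\<mu> \<nu>. prod_map d (\<phi> \<mu> \<nu>))"
  unfolding inverse_system_def
proof (intro conjI allI impI ballI)
  show "factor_map (N_d d (X \<nu>) (T \<nu>)) (G_d d (T \<nu>)) (N_d d (X \<mu>) (T \<mu>)) (G_d d (T \<mu>))
          (prod_map d (\<phi> \<mu> \<nu>))" if "\<mu> \<le> \<nu>" for \<mu> \<nu>
    using tds tds inverse_systemD(1)[OF sys that] by (rule factor_map_prod_map)
  show "prod_map d (\<phi> \<mu> \<mu>) x = x" if "x \<in> N_d d (X \<mu>) (T \<mu>)" for \<mu> x
  proof (rule prod_map_id_on)
    show "x \<in> tuples d (X \<mu>)"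
      using that N_d_subset_tuples[OF tds] by blast
    show "\<forall>a\<in>X \<mu>. \<phi> \<mu> \<mu> a = a"
      using inverse_systemD(2)[OF sys] by blast
  qed
  show "prod_map d (\<phi> \<mu> \<nu>) (prod_map d (\<phi> \<nu> \<kappa>) x) = prod_map d (\<phi> \<mu> \<kappa>) x"
    if "\<mu> \<le> \<nu> \<and> \<nu> \<le> \<kappa>" "x \<in> N_d d (X \<kappa>) (T \<kappa>)" for \<mu> \<nu> \<kappa> x
  proof (rule prod_map_prod_map)
    show "x \<in> tuples d (X \<kappa>)"
      using that N_d_subset_tuples[OF tds] by blast
    show "\<forall>a\<in>X \<kappa>. \<phi> \<mu> \<nu> (\<phi> \<nu> \<kappa> a) = \<phi> \<mu> \<kappa> a"
      using that(1) inverse_systemD(3)[OF sys] by blast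
  qed
qed

lemma compact_nest_t2:
  fixes F :: "'i::linorder \<Rightarrow> 'a::t2_space set"
  assumes compact: "\<And>i. compact (F i)" and nonempty: "\<And>i. F i \<noteq> {}"
    and mono: "\<And>i j. i \<le> j \<Longrightarrow> F j \<subseteq> F i"
  shows "\<Inter>(range F) \<noteq> {}"
proof -
  fix i\<^sub>0
  have "F i\<^sub>0 \<inter> \<Inter>(range F) \<noteq> {}"
  proof (rule compact_imp_fip)
    show "compact (F i\<^sub>0)" "\<And>S. S \<in> range F \<Longrightarrow> closed S"
      using compact compact_imp_closed by auto
    fix \<G> assume "finite \<G>" "\<G> \<subseteq> range F"
    then obtain I where I: "finite I" "\<G> = F ` I"
      by (meson finite_subset_image)
    let ?m = "Max (insert i\<^sub>0 I)"
    have "F ?m \<subseteq> F i" if "i \<in> insert i\<^sub>0 I" for i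
      using I(1) that by (intro mono Max_ge) auto
    then have "F ?m \<subseteq> F i\<^sub>0 \<inter> \<Inter>\<G>"
      using I(2) by blast
    then show "F i\<^sub>0 \<inter> \<Inter>\<G> \<noteq> {}"
      using nonempty by blast
  qed
  then show ?thesis by blast
qed

lemma inverse_limit_exists_compact:
  fixes \<psi> :: "'i::linorder \<Rightarrow> 'b::t2_space \<Rightarrow> 'a::t2_space"
  assumes "compact Y" and cont: "\<And>\<mu>. continuous_on Y (\<psi> \<mu>)" and onto: "\<And>\<mu>. \<psi> \<mu> ` Y = X \<mu>"
    and compat: "\<And>\<mu> \<nu> y. \<mu> \<le> \<nu> \<Longrightarrow> y \<in> Y \<Longrightarrow> \<phi> \<mu> \<nu> (\<psi> \<nu> y) = \<psi> \<mu> y"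
    and x: "\<And>\<mu>. x \<mu> \<in> X \<mu>" "\<And>\<mu> \<nu>. \<mu> \<le> \<nu> \<Longrightarrow> \<phi> \<mu> \<nu> (x \<nu>) = x \<mu>"
  shows "\<exists>y\<in>Y. \<forall>\<mu>. \<psi> \<mu> y = x \<mu>"
proof -
  define F where "F \<mu> = {y \<in> Y. \<psi> \<mu> y = x \<mu>}" for \<mu>
  have compact_F: "compact (F \<mu>)" for \<mu>
  proof -
    have "closed (F \<mu>)"
      unfolding F_def using cont \<open>compact Y\<close>
      by (intro continuous_closed_preimage_constant compact_imp_closed)
    then have "compact (Y \<inter> F \<mu>)"
      using \<open>compact Y\<close> by (intro compact_Int_closed)
    moreover have "Y \<inter> F \<mu> = F \<mu>"
      unfolding F_def by blast
    ultimately show ?thesis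
      by simp
  qed
  have nonempty_F: "F \<mu> \<noteq> {}" for \<mu>
  proof -
    obtain y where "y \<in> Y" "\<psi> \<mu> y = x \<mu>"
      using x(1)[of \<mu>] unfolding onto[of \<mu>, symmetric] by (metis imageE)
    then show ?thesis
      unfolding F_def by blast
  qed
  have mono_F: "F \<nu> \<subseteq> F \<mu>" if "\<mu> \<le> \<nu>" for \<mu> \<nu>
    unfolding F_def using compat[OF that] x(2)[OF that] by force
  obtain y where "y \<in> \<Inter>(range F)"
    using compact_nest_t2[of F, OF compact_F nonempty_F mono_F] by blast
  then show ?thesis
    unfolding F_def by blast
qed

lemma is_inverse_limitD:
  assumes "is_inverse_limit X T \<phi> Y S \<psi>"
  shows "inverse_system X T \<phi>" "factor_map Y S (X \<mu>) (T \<mu>) (\<psi> \<mu>)"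
    and "\<mu> \<le> \<nu> \<Longrightarrow> y \<in> Y \<Longrightarrow> \<phi> \<mu> \<nu> (\<psi> \<nu> y) = \<psi> \<mu> y"
    and "(\<forall>\<mu>. x \<mu> \<in> X \<mu>) \<Longrightarrow> (\<forall>\<mu> \<nu>. \<mu> \<le> \<nu> \<longrightarrow> \<phi> \<mu> \<nu> (x \<nu>) = x \<mu>)
           \<Longrightarrow> \<exists>!y. y \<in> Y \<and> (\<forall>\<mu>. \<psi> \<mu> y = x \<mu>)"
  using assms unfolding is_inverse_limit_def by simp_all

lemma is_inverse_limitI:
  assumes "inverse_system X T \<phi>" "\<And>\<mu>. factor_map Y S (X \<mu>) (T \<mu>) (\<psi> \<mu>)"
    and "\<And>\<mu> \<nu> y. \<mu> \<le> \<nu> \<Longrightarrow> y \<in> Y \<Longrightarrow> \<phi> \<mu> \<nu> (\<psi> \<nu> y) = \<psi> \<mu> y"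
    and exists: "\<And>x. (\<forall>\<mu>. x \<mu> \<in> X \<mu>) \<Longrightarrow> (\<forall>\<mu> \<nu>. \<mu> \<le> \<nu> \<longrightarrow> \<phi> \<mu> \<nu> (x \<nu>) = x \<mu>)
                   \<Longrightarrow> \<exists>y\<in>Y. \<forall>\<mu>. \<psi> \<mu> y = x \<mu>"
    and inj: "\<And>y y'. y \<in> Y \<Longrightarrow> y' \<in> Y \<Longrightarrow> \<forall>\<mu>. \<psi> \<mu> y = \<psi> \<mu> y' \<Longrightarrow> y = y'"
  shows "is_inverse_limit X T \<phi> Y S \<psi>"
  unfolding is_inverse_limit_def
proof (intro conjI allI impI ballI)
  show "inverse_system X T \<phi>" "factor_map Y S (X \<mu>) (T \<mu>) (\<psi> \<mu>)" for \<mu>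
    by (fact assms(1), fact assms(2))
  show "\<phi> \<mu> \<nu> (\<psi> \<nu> y) = \<psi> \<mu> y" if "\<mu> \<le> \<nu>" "y \<in> Y" for \<mu> \<nu> y
    using that by (rule assms(3))
  show "\<exists>!y. y \<in> Y \<and> (\<forall>\<mu>. \<psi> \<mu> y = x \<mu>)"
    if x: "(\<forall>\<mu>. x \<mu> \<in> X \<mu>) \<and> (\<forall>\<mu> \<nu>. \<mu> \<le> \<nu> \<longrightarrow> \<phi> \<mu> \<nu> (x \<nu>) = x \<mu>)" for x
  proof -
    obtain y where y: "y \<in> Y" "\<forall>\<mu>. \<psi> \<mu> y = x \<mu>"
      using exists[of x] x by blast
    show ?thesis
    proof (rule ex1I[of _ y])
      show "y \<in> Y \<and> (\<forall>\<mu>. \<psi> \<mu> y = x \<mu>)"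
        using y by blast
      show "z = y" if z: "z \<in> Y \<and> (\<forall>\<mu>. \<psi> \<mu> z = x \<mu>)" for z
      proof (rule inj)
        show "z \<in> Y" "y \<in> Y" "\<forall>\<mu>. \<psi> \<mu> z = \<psi> \<mu> y"
          using z y by simp_all
      qed
    qed
  qed
qed

lemma inverse_limit_inj:
  assumes lim: "is_inverse_limit X T \<phi> Y S \<psi>"
    and y: "y \<in> Y" "y' \<in> Y" "\<forall>\<mu>. \<psi> \<mu> y = \<psi> \<mu> y'"
  shows "y = y'"
proof -
  have "\<exists>!z. z \<in> Y \<and> (\<forall>\<mu>. \<psi> \<mu> z = \<psi> \<mu> y)"
  proof (rule is_inverse_limitD(4)[OF lim])
    show "\<forall>\<mu>. \<psi> \<mu> y \<in> X \<mu>"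
      using is_inverse_limitD(2)[OF lim] y(1) unfolding factor_map_def by blast
    show "\<forall>\<mu> \<nu>. \<mu> \<le> \<nu> \<longrightarrow> \<phi> \<mu> \<nu> (\<psi> \<nu> y) = \<psi> \<mu> y"
      using is_inverse_limitD(3)[OF lim] y(1) by blast
  qed
  moreover have "y \<in> Y \<and> (\<forall>\<mu>. \<psi> \<mu> y = \<psi> \<mu> y)" "y' \<in> Y \<and> (\<forall>\<mu>. \<psi> \<mu> y' = \<psi> \<mu> y)"
    using y by simp_all
  ultimately show ?thesis
    by blast
qed

lemma inverse_limit_prod_map_inj:
  assumes "is_inverse_limit X T \<phi> Y S \<psi>" "y \<in> tuples d Y" "y' \<in> tuples d Y"
    "\<forall>\<mu>. prod_map d (\<psi> \<mu>) y = prod_map d (\<psi> \<mu>) y'"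
  shows "y = y'"
proof
  fix j
  show "y j = y' j"
  proof (cases "j \<in> {1..d}")
    case True
    show ?thesis
    proof (rule inverse_limit_inj[OF assms(1)])
      show "y j \<in> Y" "y' j \<in> Y"
        using True assms(2,3) by (simp_all add: mem_tuples_iff)
      have "prod_map d (\<psi> \<mu>) y j = prod_map d (\<psi> \<mu>) y' j" for \<mu>
        using assms(4) by simp
      then show "\<forall>\<mu>. \<psi> \<mu> (y j) = \<psi> \<mu> (y' j)"
        using True by (simp add: prod_map_def)
    qed
  next
    case False
    then show ?thesis
      using assms(2,3) by (simp add: mem_tuples_iff)
  qed
qed

theorem is_inverse_limit_N_d:
  fixes X :: "'i::linorder \<Rightarrow> 'a::metric_space set" and Y :: "'b::metric_space set"
  assumes tdsX: "\<And>\<mu>. tds (X \<mu>) (T \<mu>)" and tdsY: "tds Y S"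
    and lim: "is_inverse_limit X (\<lambda>\<mu> (_::unit). T \<mu>) \<phi> Y (\<lambda>_. S) \<psi>"
  shows "is_inverse_limit (\<lambda>\<mu>. N_d d (X \<mu>) (T \<mu>)) (\<lambda>\<mu>. G_d d (T \<mu>))
           (\<lambda>\<mu> \<nu>. prod_map d (\<phi> \<mu> \<nu>)) (N_d d Y S) (G_d d S) (\<lambda>\<mu>. prod_map d (\<psi> \<mu>))"
proof (rule is_inverse_limitI)
  show "inverse_system (\<lambda>\<mu>. N_d d (X \<mu>) (T \<mu>)) (\<lambda>\<mu>. G_d d (T \<mu>)) (\<lambda>\<mu> \<nu>. prod_map d (\<phi> \<mu> \<nu>))"
    using tdsX is_inverse_limitD(1)[OF lim] by (rule inverse_system_prod_map)
  show factor: "factor_map (N_d d Y S) (G_d d S) (N_d d (X \<mu>) (T \<mu>)) (G_d d (T \<mu>))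
                  (prod_map d (\<psi> \<mu>))" for \<mu>
    using tdsY tdsX is_inverse_limitD(2)[OF lim] by (rule factor_map_prod_map)
  show compat: "prod_map d (\<phi> \<mu> \<nu>) (prod_map d (\<psi> \<nu>) y) = prod_map d (\<psi> \<mu>) y"
    if "\<mu> \<le> \<nu>" "y \<in> N_d d Y S" for \<mu> \<nu> y
  proof (rule prod_map_prod_map)
    show "y \<in> tuples d Y"
      using that(2) N_d_subset_tuples[OF tdsY] by blast
    show "\<forall>a\<in>Y. \<phi> \<mu> \<nu> (\<psi> \<nu> a) = \<psi> \<mu> a"
      using is_inverse_limitD(3)[OF lim that(1)] by blast
  qed
  show "\<exists>y\<in>N_d d Y S. \<forall>\<mu>. prod_map d (\<psi> \<mu>) y = x \<mu>"
    if x_mem: "\<forall>\<mu>. x \<mu> \<in> N_d d (X \<mu>) (T \<mu>)"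
      and x_compat: "\<forall>\<mu> \<nu>. \<mu> \<le> \<nu> \<longrightarrow> prod_map d (\<phi> \<mu> \<nu>) (x \<nu>) = x \<mu>" for x
  proof (rule inverse_limit_exists_compact[OF compact_N_d[OF tdsY]])
    show "continuous_on (N_d d Y S) (prod_map d (\<psi> \<mu>))"
      "prod_map d (\<psi> \<mu>) ` N_d d Y S = N_d d (X \<mu>) (T \<mu>)" for \<mu>
      using factor[of \<mu>] unfolding factor_map_def by blast+
    show "x \<mu> \<in> N_d d (X \<mu>) (T \<mu>)" for \<mu>
      using x_mem by blast
    show "prod_map d (\<phi> \<mu> \<nu>) (x \<nu>) = x \<mu>" if "\<mu> \<le> \<nu>" for \<mu> \<nu>
      using x_compat that by blast
  qed (rule compat)
  show "y = y'"
    if "y \<in> N_d d Y S" "y' \<in> N_d d Y S" "\<forall>\<mu>. prod_map d (\<psi> \<mu>) y = prod_map d (\<psi> \<mu>) y'" for y y'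
  proof (rule inverse_limit_prod_map_inj[OF lim _ _ that(3)])
    show "y \<in> tuples d Y" "y' \<in> tuples d Y"
      using that(1,2) N_d_subset_tuples[OF tdsY] by blast+
  qed
qed

theorem lemma5p6:
  fixes X :: "'i::wellorder \<Rightarrow> 'a::metric_space set"
    and T :: "'i \<Rightarrow> 'a \<Rightarrow> 'a"
    and \<phi> :: "'i \<Rightarrow> 'i \<Rightarrow> 'a \<Rightarrow> 'a"
    and Y :: "'b::metric_space set"
    and S :: "'b \<Rightarrow> 'b"
    and \<psi> :: "'i \<Rightarrow> 'b \<Rightarrow> 'a"
    and d :: nat
  assumes limit: "\<forall>\<mu>::'i. \<exists>\<nu>. \<mu> < \<nu>"
    and minX: "\<forall>\<mu>. minimal_sys (X \<mu>) (T \<mu>)"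
    and minY: "minimal_sys Y S"
    and invlim: "is_inverse_limit X (\<lambda>\<mu> (_::unit). T \<mu>) \<phi> Y (\<lambda>_. S) \<psi>"
    and d: "d \<ge> 1"
  shows "is_inverse_limit (\<lambda>\<mu>. N_d d (X \<mu>) (T \<mu>)) (\<lambda>\<mu>. G_d d (T \<mu>))
           (\<lambda>\<mu> \<nu>. prod_map d (\<phi> \<mu> \<nu>)) (N_d d Y S) (G_d d S) (\<lambda>\<mu>. prod_map d (\<psi> \<mu>))"
proof -
  have "tds (X \<mu>) (T \<mu>)" for \<mu>
    using minX unfolding minimal_sys_def by blast
  moreover have "tds Y S"
    using minY unfolding minimal_sys_def by blast
  ultimately show ?thesis
    using invlim by (rule is_inverse_limit_N_d)
qed

end
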